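(* Let $\mathfrak{n}=\mathfrak{v}\oplus\mathfrak{z}$ be a 2-step nilpotent real Lie algebra of Heisenberg type with center $\mathfrak{z}$ of dimension $m$. Then there is a positive definite inner product on $\mathfrak{z}$ such that the image of $\mathfrak{g}(\mathfrak{n})$ in $\mathfrak{gl}(\mathfrak{z})$ is $\mathfrak{so}(\mathfrak{z})$; in particular $\mathfrak{g}(\mathfrak{n})/\mathfrak{g}_0(\mathfrak{n})\cong\mathfrak{so}(m)$.
   Context: $\mathfrak{n}=\mathfrak{v}\oplus\mathfrak{z}$ with bracket $[\ ,\ ]:\mathfrak{v}\times\mathfrak{v}\to\mathfrak{z}$, $\mathfrak{z}$ the center. $\mathfrak{n}$ is of Heisenberg type ($H$-type) if there are positive definite inner products on $\mathfrak{v}$ and $\mathfrak{z}$ such that the maps $T_z\in\operatorname{End}(\mathfrak{v})$ defined by $\langle T_zu,v\rangle_{\mathfrak{v}}=\langle z,[u,v]\rangle_{\mathfrak{z}}$ satisfy $T_z^2=-|z|^2 I$ for all $z\in\mathfrak{z}$. $G(\mathfrak{n})$ is the group of matrices $\begin{pmatrix} a&0\\0&b\end{pmatrix}$ with $a\in SL(\mathfrak{v})$, $b\in GL(\mathfrak{z})$, $b([u,v])=[au,av]$ for all $u,v$; $G_0(\mathfrak{n})$ is its subgroup with $b=I$. $\mathfrak{g}(\mathfrak{n}),\mathfrak{g}_0(\mathfrak{n})$ are their Lie algebras, and $\mathfrak{g}(\mathfrak{n})\to\mathfrak{gl}(\mathfrak{z})$ is the map $(a,b)\mapsto b$, with kernel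 $\mathfrak{g}_0(\mathfrak{n})$. *)

theory Defs
  imports "HOL-Analysis.Analysis"
begin

definition pos_def_ip :: "('a::real_vector \<Rightarrow> 'a \<Rightarrow> real) \<Rightarrow> bool" where
  "pos_def_ip ip \<longleftrightarrow> bilinear ip \<and> (\<forall>x y. ip x y = ip y x) \<and> (\<forall>x. x \<noteq> 0 \<longrightarrow> ip x x > 0)"

text \<open>2-step nilpotent Lie algebra n = v + z given by a skew bilinear bracket
  br : v x v -> z; z is the center (no nonzero element of v is central).\<close>
definition two_step_with_center ::
  "(real^'n \<Rightarrow> real^'n \<Rightarrow> real^'m) \<Rightarrow> bool" where
  "two_step_with_center br \<longleftrightarrow> bilinear br \<and> (\<forall>u w. br u w = - br w u)
     \<and> (\<forall>u. (\<forall>w. br u w = 0) \<longrightarrow> u = 0)"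

definition H_type :: "(real^'n \<Rightarrow> real^'n \<Rightarrow> real^'m) \<Rightarrow> bool" where
  "H_type br \<longleftrightarrow> (\<exists>ipv ipz. pos_def_ip ipv \<and> pos_def_ip ipz \<and>
     (\<forall>z. \<exists>T. linear T \<and> (\<forall>u w. ipv (T u) w = ipz z (br u w))
            \<and> (\<forall>u. T (T u) = - (ipz z z) *\<^sub>R u)))"

text \<open>The Lie algebra g(n): pairs (a,b), a in sl(v), b in gl(z), with
  b[u,w] = [au,w] + [u,aw] (Lie algebra of G(n)).\<close>
definition g_alg :: "(real^'n \<Rightarrow> real^'n \<Rightarrow> real^'m)
     \<Rightarrow> ((real^'n^'n) \<times> (real^'m \<Rightarrow> real^'m)) set" where
  "g_alg br = {p. trace (fst p) = 0 \<and> linear (snd p) \<and>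
     (\<forall>u w. snd p (br u w) = br (fst p *v u) w + br u (fst p *v w))}"

definition g_image :: "(real^'n \<Rightarrow> real^'n \<Rightarrow> real^'m) \<Rightarrow> (real^'m \<Rightarrow> real^'m) set" where
  "g_image br = snd ` g_alg br"

definition so_ip :: "('a::real_vector \<Rightarrow> 'a \<Rightarrow> real) \<Rightarrow> ('a \<Rightarrow> 'a) set" where
  "so_ip ip = {b. linear b \<and> (\<forall>x y. ip (b x) y = - ip x (b y))}"

end

theory Submission
  imports Defs
begin

text \<open>Fix inner products on v and z witnessing the H-type condition and let \<open>T z\<close> be the
  corresponding maps; they are linear in z, skew, and satisfy the Clifford relation
  \<open>T x \<circ> T y + T y \<circ> T x = -2 \<langle>x,y\<rangle>\<close>.
  If \<open>(a,b) \<in> g(n)\<close>, pairing the derivation identity for b with the vector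
  \<open>\<Sum>\<^sub>i [e\<^sub>i, T z f\<^sub>i] = (dim v) z\<close> (\<open>f\<^sub>i\<close> the dual basis) expresses \<open>\<langle>z, b z\<rangle>\<close> through the
  traces of a and of \<open>T z \<circ> a \<circ> T z\<close>, the latter being \<open>-|z|\<^sup>2 tr a\<close> by cyclicity; so it vanishes when
  \<open>tr a = 0\<close>, and b is skew. Conversely so(z) is spanned by the maps
  \<open>x \<and> y : v \<mapsto> \<langle>x,v\<rangle> y - \<langle>y,v\<rangle> x\<close>, and each of them is the image of
  \<open>(1/4 [T x, T y], x \<and> y) \<in> g(n)\<close>, the lift being traceless as a commutator.\<close>

lemma bilinear_sum_left: "bilinear h \<Longrightarrow> h (sum g S) w = (\<Sum>k\<in>S. h (g k) w)"
  using linear_sum[of "\<lambda>x. h x w"] unfolding bilinear_def by blast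

lemma bilinear_sum_right: "bilinear h \<Longrightarrow> h w (sum g S) = (\<Sum>k\<in>S. h w (g k))"
  using linear_sum[of "\<lambda>x. h w x"] unfolding bilinear_def by blast

lemma pos_def_ip_bilinear: "pos_def_ip ip \<Longrightarrow> bilinear ip"
  by (simp add: pos_def_ip_def)

lemma pos_def_ip_sym: "pos_def_ip ip \<Longrightarrow> ip x y = ip y x"
  by (simp add: pos_def_ip_def)

lemma pos_def_ip_eqI:
  assumes "pos_def_ip ip" "\<And>w. ip a w = ip b w"
  shows "a = b"
proof (rule ccontr)
  assume "a \<noteq> b"
  hence "ip (a - b) (a - b) > 0" using assms(1) by (simp add: pos_def_ip_def)
  moreover have "ip (a - b) (a - b) = 0"
    using assms by (simp add: bilinear_lsub pos_def_ip_bilinear)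
  ultimately show False by simp
qed

lemma pos_def_ip_eqI':
  assumes "pos_def_ip ip" "\<And>w. ip w a = ip w b"
  shows "a = b"
  using pos_def_ip_eqI[OF assms(1)] assms pos_def_ip_sym[OF assms(1)] by metis

lemma pos_def_ip_expand_left:
  fixes ip :: "real^'k \<Rightarrow> real^'k \<Rightarrow> real"
  assumes "pos_def_ip ip"
  shows "ip x w = (\<Sum>i\<in>UNIV. x$i * ip (axis i 1) w)"
proof -
  have "ip x w = ip (\<Sum>i\<in>UNIV. (x$i) *\<^sub>R axis i 1) w"
    using basis_expansion[of x] by (simp add: scalar_mult_eq_scaleR)
  also have "\<dots> = (\<Sum>i\<in>UNIV. x$i * ip (axis i 1) w)"
    using pos_def_ip_bilinear[OF assms] by (simp add: bilinear_sum_left bilinear_lmul)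
  finally show ?thesis .
qed

lemma pos_def_ip_dual_basis_exists:
  fixes ip :: "real^'k \<Rightarrow> real^'k \<Rightarrow> real"
  assumes ip: "pos_def_ip ip"
  shows "\<exists>f. \<forall>i j. ip (axis i 1) (f j) = (if i = j then 1 else 0)"
proof -
  note bil = pos_def_ip_bilinear[OF ip]
  define F where "F w = (\<chi> i. ip (axis i 1) w)" for w
  have "linear F"
    by (rule linearI) (simp_all add: F_def vec_eq_iff bilinear_radd[OF bil] bilinear_rmul[OF bil])
  moreover have "inj F"
  proof (rule injI)
    fix w w' assume "F w = F w'"
    hence "ip (axis i 1) w = ip (axis i 1) w'" for i by (simp add: F_def vec_eq_iff)
    then have "ip x w = ip x w'" for x
      using pos_def_ip_expand_left[OF ip, of x w] pos_def_ip_expand_left[OF ip, of x w'] by simp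
    then show "w = w'" by (rule pos_def_ip_eqI'[OF ip])
  qed
  ultimately have "surj F" by (simp add: linear_injective_imp_surjective)
  then have "F (inv F (axis j 1)) $ i = axis j 1 $ i" for i j by (simp add: surj_f_inv_f)
  then have "ip (axis i 1) (inv F (axis j 1)) = (if i = j then 1 else 0)" for i j
    by (simp add: F_def axis_def)
  then show ?thesis by (intro exI[of _ "\<lambda>j. inv F (axis j 1)"]) simp
qed

definition map_trace :: "(real^'k \<Rightarrow> real^'k) \<Rightarrow> real" where
  "map_trace L = (\<Sum>i\<in>UNIV. L (axis i 1) $ i)"

lemma trace_matrix: "trace (matrix L) = map_trace L"
  by (simp add: trace_def matrix_def map_trace_def)

lemma map_trace_matrix_vector_mult: "map_trace (\<lambda>u. A *v u) = trace A"
  using trace_matrix[of "\<lambda>u. A *v u"] by simp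

lemma map_trace_commute:
  fixes P Q :: "real^'k \<Rightarrow> real^'k"
  assumes "linear P" "linear Q"
  shows "map_trace (\<lambda>u. P (Q u)) = map_trace (\<lambda>u. Q (P u))"
proof -
  have "map_trace (\<lambda>u. P (Q u)) = trace (matrix P ** matrix Q)"
    using matrix_compose[OF assms(2,1)] by (simp add: trace_matrix[symmetric] o_def)
  also have "\<dots> = trace (matrix Q ** matrix P)" by (rule trace_mul_sym)
  also have "\<dots> = map_trace (\<lambda>u. Q (P u))"
    using matrix_compose[OF assms] by (simp add: trace_matrix[symmetric] o_def)
  finally show ?thesis .
qed

lemma map_trace_add: "map_trace (\<lambda>u. L u + M u) = map_trace L + map_trace M"
  by (simp add: map_trace_def sum.distrib)

lemma map_trace_diff: "map_trace (\<lambda>u. L u - M u) = map_trace L - map_trace M"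
  by (simp add: map_trace_def sum_subtractf)

lemma map_trace_scaleR: "map_trace (\<lambda>u. c *\<^sub>R L u) = c * map_trace L"
  by (simp add: map_trace_def sum_distrib_left)

lemma map_trace_neg: "map_trace (\<lambda>u. - L u) = - map_trace L"
  by (simp add: map_trace_def sum_negf)

lemma map_trace_id: "map_trace (\<lambda>u::real^'k. u) = real CARD('k)"
  by (simp add: map_trace_def axis_def)

lemma map_trace_sum: "map_trace (\<lambda>u. \<Sum>j\<in>S. L j u) = (\<Sum>j\<in>S. map_trace (L j))"
  unfolding map_trace_def by (simp add: sum_component) (rule sum.swap)

lemma map_trace_cong: "(\<And>u. L u = M u) \<Longrightarrow> map_trace L = map_trace M"
  by (simp add: map_trace_def)

locale dual_basis =
  fixes ip :: "real^'k \<Rightarrow> real^'k \<Rightarrow> real" and f :: "'k \<Rightarrow> real^'k"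
  assumes pos_def: "pos_def_ip ip"
    and dual: "\<And>i j. ip (axis i 1) (f j) = (if i = j then 1 else 0)"
begin

lemma ip_bilinear: "bilinear ip"
  using pos_def by (rule pos_def_ip_bilinear)

lemma ip_sym: "ip x y = ip y x"
  using pos_def by (rule pos_def_ip_sym)

lemma ip_dual_eq_component: "ip x (f j) = x $ j"
  by (simp only: pos_def_ip_expand_left[OF pos_def, of x "f j"]) (simp add: dual if_distrib cong: if_cong)

lemma ip_expand_right: "ip x w = (\<Sum>i\<in>UNIV. w$i * ip x (axis i 1))"
  using pos_def_ip_expand_left[OF pos_def, of w x] by (simp add: ip_sym)

lemma dual_component_sym: "f i $ k = f k $ i"
  by (metis ip_dual_eq_component ip_sym)

lemma map_trace_eq_sum_ip: "map_trace L = (\<Sum>i\<in>UNIV. ip (L (axis i 1)) (f i))"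
  by (simp add: map_trace_def ip_dual_eq_component)

lemma expansion: "x = (\<Sum>k\<in>UNIV. ip x (f k) *\<^sub>R axis k 1)"
  using basis_expansion[of x] by (simp add: scalar_mult_eq_scaleR ip_dual_eq_component)

lemma expansion_dual: "x = (\<Sum>k\<in>UNIV. ip x (axis k 1) *\<^sub>R f k)"
proof (rule pos_def_ip_eqI[OF pos_def])
  fix w
  have "ip (\<Sum>k\<in>UNIV. ip x (axis k 1) *\<^sub>R f k) w
      = (\<Sum>i\<in>UNIV. w$i * (\<Sum>k\<in>UNIV. ip x (axis k 1) * ip (f k) (axis i 1)))"
    by (simp add: ip_expand_right[of _ w] bilinear_sum_left[OF ip_bilinear] bilinear_lmul[OF ip_bilinear])
  also have "\<dots> = ip x w"
    by (simp add: ip_sym[of "f _"] dual if_distrib ip_expand_right[of x w] cong: if_cong)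
  finally show "ip x w = ip (\<Sum>k\<in>UNIV. ip x (axis k 1) *\<^sub>R f k) w" by simp
qed

lemma map_trace_eq_sum_ip_dual:
  assumes "linear L"
  shows "(\<Sum>i\<in>UNIV. ip (L (f i)) (axis i 1)) = map_trace L"
proof -
  have "L (f i) = (\<Sum>k\<in>UNIV. f i $ k *\<^sub>R L (axis k 1))" for i
    using arg_cong[OF expansion[of "f i"], of L] assms
    by (simp add: linear_sum linear_scale ip_dual_eq_component)
  hence "(\<Sum>i\<in>UNIV. ip (L (f i)) (axis i 1))
      = (\<Sum>i\<in>UNIV. \<Sum>k\<in>UNIV. f k $ i * ip (L (axis k 1)) (axis i 1))"
    by (simp add: bilinear_sum_left[OF ip_bilinear] bilinear_lmul[OF ip_bilinear] dual_component_sym)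
  also have "\<dots> = map_trace L"
    by (subst sum.swap) (simp add: map_trace_eq_sum_ip ip_expand_right[of _ "f _"])
  finally show ?thesis .
qed

end

subsection \<open>The maps \<open>T z\<close> of an H-type Lie algebra\<close>

locale H_type_structure = V: dual_basis ipv fv + Z: dual_basis ipz fz
  for ipv :: "real^'n \<Rightarrow> real^'n \<Rightarrow> real" and fv
  and ipz :: "real^'m \<Rightarrow> real^'m \<Rightarrow> real" and fz +
  fixes br :: "real^'n \<Rightarrow> real^'n \<Rightarrow> real^'m" and T :: "real^'m \<Rightarrow> real^'n \<Rightarrow> real^'n"
  assumes br_bilinear: "bilinear br" and br_skew: "\<And>u w. br u w = - br w u"
    and T_linear: "\<And>z. linear (T z)"
    and ip_T: "\<And>z u w. ipv (T z u) w = ipz z (br u w)"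
    and T_T: "\<And>z u. T z (T z u) = - (ipz z z) *\<^sub>R u"
begin

lemma T_skew: "ipv (T z u) w = - ipv u (T z w)"
proof -
  have "ipv (T z u) w = ipz z (- br w u)" by (simp add: ip_T br_skew[of u w])
  also have "\<dots> = - ipv u (T z w)" by (simp add: bilinear_rneg[OF Z.ip_bilinear] ip_T[of z w u, symmetric] V.ip_sym[of u])
  finally show ?thesis .
qed

lemma ip_T_T: "ipv (T z p) (T z q) = ipz z z * ipv p q"
  using T_skew[of z "T z p" q]
  by (simp add: T_T bilinear_lmul[OF V.ip_bilinear] bilinear_lneg[OF V.ip_bilinear])

lemma T_add: "T (x + y) u = T x u + T y u"
  by (rule pos_def_ip_eqI[OF V.pos_def])
    (simp add: ip_T bilinear_ladd[OF V.ip_bilinear] bilinear_ladd[OF Z.ip_bilinear])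

lemma T_anticommute: "T x (T y u) + T y (T x u) = - (2 * ipz x y) *\<^sub>R u"
proof -
  have "ipz (x + y) (x + y) = ipz x x + 2 * ipz x y + ipz y y"
    by (simp add: bilinear_ladd[OF Z.ip_bilinear] bilinear_radd[OF Z.ip_bilinear] Z.ip_sym[of y x])
  moreover have "T (x + y) (T (x + y) u) = T x (T x u) + T y (T y u) + (T x (T y u) + T y (T x u))"
    by (simp add: T_add linear_add[OF T_linear] algebra_simps)
  ultimately have "- (ipz x x + 2 * ipz x y + ipz y y) *\<^sub>R u
      = - ipz x x *\<^sub>R u + - ipz y y *\<^sub>R u + (T x (T y u) + T y (T x u))"
    by (simp only: T_T)
  thus ?thesis by (simp add: algebra_simps)
qed

lemma map_trace_T_T: "map_trace (\<lambda>u. T x (T y u)) = - ipz x y * real CARD('n)"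
proof -
  have "map_trace (\<lambda>u. T x (T y u)) + map_trace (\<lambda>u. T y (T x u))
      = map_trace (\<lambda>u::real^'n. - ((2 * ipz x y) *\<^sub>R u))"
    by (simp add: map_trace_add[symmetric] T_anticommute)
  also have "\<dots> = - (2 * ipz x y) * real CARD('n)"
    by (simp only: map_trace_neg map_trace_scaleR map_trace_id)
  finally show ?thesis using map_trace_commute[OF T_linear T_linear, of x y] by (simp add: algebra_simps)
qed

lemma sum_br_T_dual: "(\<Sum>i\<in>UNIV. br (axis i 1) (T z (fv i))) = real CARD('n) *\<^sub>R z"
proof (rule pos_def_ip_eqI'[OF Z.pos_def])
  fix y
  have "ipz y (\<Sum>i\<in>UNIV. br (axis i 1) (T z (fv i))) = (\<Sum>i\<in>UNIV. ipv (T y (axis i 1)) (T z (fv i)))"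
    by (simp add: bilinear_sum_right[OF Z.ip_bilinear] ip_T)
  also have "\<dots> = (\<Sum>i\<in>UNIV. - ipv (T z (T y (axis i 1))) (fv i))"
    by (rule sum.cong, simp, metis T_skew V.ip_sym)
  also have "\<dots> = - map_trace (\<lambda>u. T z (T y u))" by (simp add: V.map_trace_eq_sum_ip sum_negf)
  also have "\<dots> = ipz y (real CARD('n) *\<^sub>R z)"
    by (simp add: map_trace_T_T bilinear_rmul[OF Z.ip_bilinear] Z.ip_sym)
  finally show "ipz y (\<Sum>i\<in>UNIV. br (axis i 1) (T z (fv i))) = ipz y (real CARD('n) *\<^sub>R z)" .
qed

lemma sum_ip_T_conj:
  assumes A: "linear A"
  shows "(\<Sum>i\<in>UNIV. ipv (T z (axis i 1)) (A (T z (fv i)))) = ipz z z * map_trace A"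
proof -
  have "ipv (T z (axis i 1)) (A (T z (fv i))) = - ipv (T z (A (T z (fv i)))) (axis i 1)" for i
    using T_skew[of z "axis i 1" "A (T z (fv i))"] V.ip_sym[of "axis i 1"] by simp
  then have "(\<Sum>i\<in>UNIV. ipv (T z (axis i 1)) (A (T z (fv i))))
      = - (\<Sum>i\<in>UNIV. ipv (T z (A (T z (fv i)))) (axis i 1))"
    by (simp only: sum_negf)
  also have "(\<Sum>i\<in>UNIV. ipv (T z (A (T z (fv i)))) (axis i 1)) = map_trace (\<lambda>u. T z (A (T z u)))"
    using linear_compose[OF linear_compose[OF T_linear A] T_linear]
    by (intro V.map_trace_eq_sum_ip_dual) (simp add: o_def)
  also have "\<dots> = map_trace (\<lambda>u. A (T z (T z u)))"
    using map_trace_commute[OF T_linear linear_compose[OF T_linear A, unfolded o_def], of z z] by simp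
  also have "\<dots> = map_trace (\<lambda>u. - (ipz z z *\<^sub>R A u))"
    by (rule map_trace_cong) (simp add: T_T linear_scale[OF A] linear_neg[OF A])
  also have "\<dots> = - ipz z z * map_trace A"
    by (simp only: map_trace_neg map_trace_scaleR)
  finally show ?thesis by simp
qed

subsection \<open>The image of \<open>g(n)\<close> consists of skew maps\<close>

lemma ip_derivation_self_eq_0:
  assumes tr: "trace a = 0" and b: "linear b"
    and der: "\<And>u w. b (br u w) = br (a *v u) w + br u (a *v w)"
  shows "ipz z (b z) = 0"
proof -
  define A where "A u = a *v u" for u
  have A: "linear A" and "map_trace A = 0"
    using tr map_trace_matrix_vector_mult[of a] by (simp_all add: A_def[abs_def])
  have "real CARD('n) * ipz z (b z) = ipz z (b (real CARD('n) *\<^sub>R z))"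
    by (simp add: linear_scale[OF b] bilinear_rmul[OF Z.ip_bilinear])
  also have "\<dots> = (\<Sum>i\<in>UNIV. ipz z (b (br (axis i 1) (T z (fv i)))))"
    by (simp add: sum_br_T_dual[symmetric] linear_sum[OF b] bilinear_sum_right[OF Z.ip_bilinear])
  also have "\<dots> = (\<Sum>i\<in>UNIV. ipv (T z (A (axis i 1))) (T z (fv i)))
                + (\<Sum>i\<in>UNIV. ipv (T z (axis i 1)) (A (T z (fv i))))"
    by (simp add: der bilinear_radd[OF Z.ip_bilinear] ip_T sum.distrib A_def)
  also have "\<dots> = 2 * ipz z z * map_trace A"
    by (simp add: ip_T_T V.map_trace_eq_sum_ip sum_distrib_left sum_ip_T_conj[OF A] mult.assoc)
  finally show ?thesis using \<open>map_trace A = 0\<close> by simp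
qed

lemma derivation_skew:
  assumes "trace a = 0" and b: "linear b"
    and "\<And>u w. b (br u w) = br (a *v u) w + br u (a *v w)"
  shows "ipz (b x) y = - ipz x (b y)"
proof -
  note zero = ip_derivation_self_eq_0[OF assms]
  have "ipz (x + y) (b (x + y)) = 0" by (rule zero)
  hence "ipz x (b y) + ipz y (b x) = 0"
    using zero[of x] zero[of y]
    by (simp add: linear_add[OF b] bilinear_ladd[OF Z.ip_bilinear] bilinear_radd[OF Z.ip_bilinear])
  thus ?thesis by (simp add: Z.ip_sym[of y] eq_neg_iff_add_eq_0 add.commute)
qed

lemma g_image_subset_so: "g_image br \<subseteq> so_ip ipz"
  unfolding g_image_def g_alg_def so_ip_def using derivation_skew by auto

subsection \<open>Every skew map lies in the image of \<open>g(n)\<close>\<close>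

definition wedge :: "real^'m \<Rightarrow> real^'m \<Rightarrow> real^'m \<Rightarrow> real^'m" where
  "wedge x y v = ipz x v *\<^sub>R y - ipz y v *\<^sub>R x"

definition spin_lift :: "real^'m \<Rightarrow> real^'m \<Rightarrow> real^'n \<Rightarrow> real^'n" where
  "spin_lift x y u = (1/4) *\<^sub>R (T x (T y u) - T y (T x u))"

lemma linear_spin_lift: "linear (spin_lift x y)"
  by (rule linearI) (simp_all add: spin_lift_def linear_add[OF T_linear] linear_scale[OF T_linear] algebra_simps)

lemma map_trace_spin_lift: "map_trace (spin_lift x y) = 0"
  unfolding spin_lift_def
  by (simp add: map_trace_scaleR map_trace_diff map_trace_commute[OF T_linear T_linear, of x y])

lemma T_T_T_rotate:
  "T z (T x (T y u)) = T x (T y (T z u)) + (2 * ipz z y) *\<^sub>R T x u - (2 * ipz z x) *\<^sub>R T y u"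
proof -
  have swap: "T z (T x v) = - T x (T z v) - (2 * ipz z x) *\<^sub>R v" for x v
  proof -
    have "T z (T x v) = (T z (T x v) + T x (T z v)) - T x (T z v)" by simp
    also have "\<dots> = - (2 * ipz z x) *\<^sub>R v - T x (T z v)" by (simp only: T_anticommute)
    finally show ?thesis by simp
  qed
  have "T z (T x (T y u)) = - T x (T z (T y u)) - (2 * ipz z x) *\<^sub>R T y u" by (rule swap)
  also have "T x (T z (T y u)) = - T x (T y (T z u)) - (2 * ipz z y) *\<^sub>R T x u"
    by (simp only: swap linear_diff[OF T_linear] linear_neg[OF T_linear] linear_scale[OF T_linear])
  finally show ?thesis by simp
qed

lemma commutator_T_spin_lift:
  "T z (spin_lift x y u) - spin_lift x y (T z u) = T (wedge y x z) u"
proof -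
  have "T z (spin_lift x y u) - spin_lift x y (T z u)
      = (1/4) *\<^sub>R ((T x (T y (T z u)) + (2 * ipz z y) *\<^sub>R T x u - (2 * ipz z x) *\<^sub>R T y u)
          - (T y (T x (T z u)) + (2 * ipz z x) *\<^sub>R T y u - (2 * ipz z y) *\<^sub>R T x u))
        - (1/4) *\<^sub>R (T x (T y (T z u)) - T y (T x (T z u)))"
    by (simp only: spin_lift_def linear_diff[OF T_linear] linear_scale[OF T_linear]
        T_T_T_rotate[of z x y] T_T_T_rotate[of z y x])
  also have "\<dots> = ipz z y *\<^sub>R T x u - ipz z x *\<^sub>R T y u"
    by (simp add: vec_eq_iff field_simps)
  also have "\<dots> = T (wedge y x z) u"
    by (rule pos_def_ip_eqI[OF V.pos_def])
      (simp add: wedge_def ip_T bilinear_lsub[OF V.ip_bilinear] bilinear_lmul[OF V.ip_bilinear]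
        bilinear_lsub[OF Z.ip_bilinear] bilinear_lmul[OF Z.ip_bilinear] Z.ip_sym[of _ z])
  finally show ?thesis .
qed

lemma wedge_derivation:
  "wedge x y (br u w) = br (spin_lift x y u) w + br u (spin_lift x y w)"
proof (rule pos_def_ip_eqI'[OF Z.pos_def])
  fix z
  have T_conj: "ipv p (T c (T d q)) = ipv (T d (T c p)) q" for p q c d
    using T_skew[of c p "T d q"] T_skew[of d "T c p" q] by simp
  have "ipv (T z u) (spin_lift x y w) = - ipv (spin_lift x y (T z u)) w"
    by (simp add: spin_lift_def bilinear_rmul[OF V.ip_bilinear] bilinear_rsub[OF V.ip_bilinear]
        bilinear_lmul[OF V.ip_bilinear] bilinear_lsub[OF V.ip_bilinear] T_conj field_simps)
  then have "ipz z (br (spin_lift x y u) w + br u (spin_lift x y w))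
      = ipv (T z (spin_lift x y u) - spin_lift x y (T z u)) w"
    by (simp add: bilinear_radd[OF Z.ip_bilinear] ip_T[symmetric] bilinear_lsub[OF V.ip_bilinear])
  also have "\<dots> = ipz z (wedge x y (br u w))"
    by (simp add: commutator_T_spin_lift ip_T wedge_def bilinear_lsub[OF Z.ip_bilinear]
        bilinear_lmul[OF Z.ip_bilinear] bilinear_rsub[OF Z.ip_bilinear] bilinear_rmul[OF Z.ip_bilinear]
        Z.ip_sym[of _ z])
  finally show "ipz z (wedge x y (br u w)) = ipz z (br (spin_lift x y u) w + br u (spin_lift x y w))"
    by simp
qed

lemma skew_eq_sum_wedge:
  assumes b: "linear b" and skew: "\<And>x y. ipz (b x) y = - ipz x (b y)"
  shows "b v = (\<Sum>j\<in>UNIV. (1/2) *\<^sub>R wedge (fz j) (b (axis j 1)) v)"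
proof -
  have "(\<Sum>j\<in>UNIV. ipz (fz j) v *\<^sub>R b (axis j 1)) = b (\<Sum>j\<in>UNIV. ipz v (fz j) *\<^sub>R axis j 1)"
    by (simp add: linear_sum[OF b] linear_scale[OF b] Z.ip_sym[of "fz _"])
  also have "\<dots> = b v" using Z.expansion[of v, symmetric] by simp
  finally have 1: "(\<Sum>j\<in>UNIV. ipz (fz j) v *\<^sub>R b (axis j 1)) = b v" .
  have "ipz (b (axis j 1)) v = - ipz (b v) (axis j 1)" for j
    using skew[of "axis j 1" v] Z.ip_sym[of "axis j 1"] by simp
  then have "(\<Sum>j\<in>UNIV. ipz (b (axis j 1)) v *\<^sub>R fz j) = - (\<Sum>j\<in>UNIV. ipz (b v) (axis j 1) *\<^sub>R fz j)"
    by (simp add: sum_negf)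
  also have "\<dots> = - b v" using Z.expansion_dual[of "b v", symmetric] by simp
  finally have 2: "(\<Sum>j\<in>UNIV. ipz (b (axis j 1)) v *\<^sub>R fz j) = - b v" .
  show ?thesis
    by (simp add: wedge_def scaleR_sum_right[symmetric] sum_subtractf 1 2)
qed

lemma so_subset_g_image: "so_ip ipz \<subseteq> g_image br"
proof
  fix b assume "b \<in> so_ip ipz"
  then have b: "linear b" and skew: "\<And>x y. ipz (b x) y = - ipz x (b y)"
    by (simp_all add: so_ip_def)
  define a where "a u = (\<Sum>j\<in>UNIV. (1/2) *\<^sub>R spin_lift (fz j) (b (axis j 1)) u)" for u
  have "linear a"
    by (rule linearI) (simp_all add: a_def linear_add[OF linear_spin_lift]
        linear_scale[OF linear_spin_lift] sum.distrib scaleR_sum_right algebra_simps)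
  then have a_eq: "matrix a *v u = a u" for u
    by (simp add: matrix_works linear_def scalar_mult_eq_scaleR)
  have "trace (matrix a) = 0"
    by (simp add: trace_matrix a_def[abs_def] map_trace_sum map_trace_scaleR map_trace_spin_lift)
  moreover have "b (br u w) = br (matrix a *v u) w + br u (matrix a *v w)" for u w
    by (simp add: skew_eq_sum_wedge[OF b skew, of "br u w"] wedge_derivation a_eq a_def
        bilinear_sum_left[OF br_bilinear] bilinear_sum_right[OF br_bilinear]
        bilinear_lmul[OF br_bilinear] bilinear_rmul[OF br_bilinear] sum.distrib scaleR_add_right)
  ultimately have "(matrix a, b) \<in> g_alg br" using b by (simp add: g_alg_def)
  thus "b \<in> g_image br" unfolding g_image_def by (rule image_eqI[rotated]) simp
qed

lemma g_image_eq_so: "g_image br = so_ip ipz"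
  using g_image_subset_so so_subset_g_image by (rule equalityI)

end

lemma H_type_structure_exists:
  fixes br :: "real^'n \<Rightarrow> real^'n \<Rightarrow> real^'m"
  assumes "bilinear br" "\<And>u w. br u w = - br w u" "H_type br"
  obtains ipv fv ipz fz T where "H_type_structure ipv fv ipz fz br T"
proof -
  from \<open>H_type br\<close> obtain ipv ipz where v: "pos_def_ip ipv" and z: "pos_def_ip ipz" and
    "\<forall>z. \<exists>T. linear T \<and> (\<forall>u w. ipv (T u) w = ipz z (br u w)) \<and> (\<forall>u. T (T u) = - (ipz z z) *\<^sub>R u)"
    unfolding H_type_def by blast
  from choice[OF this(3)] obtain T where T: "\<And>z. linear (T z) \<and> (\<forall>u w. ipv (T z u) w = ipz z (br u w))
      \<and> (\<forall>u. T z (T z u) = - (ipz z z) *\<^sub>R u)"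
    by blast
  obtain fv where fv: "\<forall>i j. ipv (axis i 1) (fv j) = (if i = j then 1 else 0)"
    using pos_def_ip_dual_basis_exists[OF v] by blast
  obtain fz where fz: "\<forall>i j. ipz (axis i 1) (fz j) = (if i = j then 1 else 0)"
    using pos_def_ip_dual_basis_exists[OF z] by blast
  have "H_type_structure ipv fv ipz fz br T"
    by (intro H_type_structure.intro dual_basis.intro H_type_structure_axioms.intro)
      (use v z fv fz T assms(1,2) in blast)+
  then show thesis by (rule that)
qed

theorem proposition2p2:
  fixes br :: "real^'n \<Rightarrow> real^'n \<Rightarrow> real^'m"
  assumes "two_step_with_center br"
    and "H_type br"
  shows "\<exists>ip :: real^'m \<Rightarrow> real^'m \<Rightarrow> real. pos_def_ip ip \<and> g_image br = so_ip ip"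
proof -
  have "bilinear br" "\<And>u w. br u w = - br w u"
    using assms(1) unfolding two_step_with_center_def by blast+
  then obtain ipv fv ipz fz T where H: "H_type_structure ipv fv ipz fz br T"
    using assms(2) by (rule H_type_structure_exists)
  then have "pos_def_ip ipz" by (simp add: H_type_structure_def dual_basis_def)
  with H_type_structure.g_image_eq_so[OF H] show ?thesis by blast
qed

end
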